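(* Let $X_1,\dots,X_n$ be the $x$-slices of a tensor $T\in\overline{\mathrm{OT}_n(\mathbb{C})}$. Then the $n^2$ matrices $X_k^TX_l$ ($1\le k,l\le n$) are symmetric and approximately simultaneously diagonalizable, and likewise the $n^2$ matrices $X_kX_l^T$ are symmetric and approximately simultaneously diagonalizable. The same holds for the $y$-slices and for the $z$-slices.
   Context: Associate to $T$ the trilinear form $t=\sum_{i,j,k}T_{ijk}x_iy_jz_k$. $\mathrm{OT}_n(\mathbb{C})$ is the set of tensors whose trilinear form can be written $g(Ax,By,Cz)$ with $A,B,C$ complex orthogonal ($A^TA=\mathrm{Id}$) and $g=\sum_i\alpha_ix_iy_iz_i$; closure is in the Euclidean topology. Slices: $X_k=(T_{kjl})_{j,l}$, $Y_k=(T_{ikl})_{i,l}$, $Z_k=(T_{ijk})_{i,j}$. A tuple $(M_1,\dots,M_m)$ of matrices in $M_n(\mathbb{C})$ is approximately simultaneously diagonalizable if for every $\epsilon>0$ there are simultaneously diagonalizable $B_1,\dots,B_m$ with $\|M_i-B_i\|<\epsilon$ for all $i$. *)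

theory Defs
  imports "HOL-Analysis.Analysis"
begin

text \<open>Tensors in C^n (x) C^n (x) C^n, the dimension n being the cardinality of the
  finite index type 'n. Entry T_{ijk} is T $ i $ j $ k.\<close>
type_synonym 'n tensor3 = "complex ^'n ^'n ^'n"

definition trilinear_form :: "'n::finite tensor3 \<Rightarrow> complex^'n \<Rightarrow> complex^'n \<Rightarrow> complex^'n \<Rightarrow> complex" where
  "trilinear_form T x y z = (\<Sum>i\<in>UNIV. \<Sum>j\<in>UNIV. \<Sum>k\<in>UNIV. T $ i $ j $ k * x $ i * y $ j * z $ k)"

definition complex_orthogonal :: "complex^'n^'n \<Rightarrow> bool" where
  "complex_orthogonal A \<longleftrightarrow> transpose A ** A = mat 1"

definition diag_form :: "complex^'n \<Rightarrow> complex^'n \<Rightarrow> complex^'n \<Rightarrow> complex^'n \<Rightarrow> complex" where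
  "diag_form \<alpha> x y z = (\<Sum>i\<in>UNIV. \<alpha> $ i * x $ i * y $ i * z $ i)"

definition OT :: "'n::finite tensor3 set" where
  "OT = {T. \<exists>A B C \<alpha>. complex_orthogonal A \<and> complex_orthogonal B \<and> complex_orthogonal C \<and>
             (\<forall>x y z. trilinear_form T x y z = diag_form \<alpha> (A *v x) (B *v y) (C *v z))}"

definition xslice :: "'n::finite tensor3 \<Rightarrow> 'n \<Rightarrow> complex^'n^'n" where
  "xslice T k = (\<chi> j l. T $ k $ j $ l)"

definition yslice :: "'n::finite tensor3 \<Rightarrow> 'n \<Rightarrow> complex^'n^'n" where
  "yslice T k = (\<chi> i l. T $ i $ k $ l)"

definition zslice :: "'n::finite tensor3 \<Rightarrow> 'n \<Rightarrow> complex^'n^'n" where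
  "zslice T k = (\<chi> i j. T $ i $ j $ k)"

definition is_diagonal_matrix :: "complex^'n^'n \<Rightarrow> bool" where
  "is_diagonal_matrix D \<longleftrightarrow> (\<forall>i j. i \<noteq> j \<longrightarrow> D $ i $ j = 0)"

definition symmetric_matrix :: "complex^'n^'n \<Rightarrow> bool" where
  "symmetric_matrix M \<longleftrightarrow> transpose M = M"

definition simultaneously_diagonalizable :: "('i \<Rightarrow> complex^'n::finite^'n) \<Rightarrow> bool" where
  "simultaneously_diagonalizable B \<longleftrightarrow>
     (\<exists>P::complex^'n^'n. invertible P \<and> (\<forall>i. is_diagonal_matrix (matrix_inv P ** B i ** P)))"

definition approx_simultaneously_diagonalizable :: "('i \<Rightarrow> complex^'n::finite^'n) \<Rightarrow> bool" where
  "approx_simultaneously_diagonalizable M \<longleftrightarrow>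
     (\<forall>e>0. \<exists>B. simultaneously_diagonalizable B \<and> (\<forall>i. norm (M i - B i) < e))"

end

theory Submission
  imports Defs
begin

text \<open>If \<open>T \<in> OT\<close> then every slice family has the shape \<open>S\<^sub>k = P\<^sup>T D\<^sub>k Q\<close> with
  \<open>P, Q\<close> complex orthogonal and \<open>D\<^sub>k\<close> diagonal, so \<open>S\<^sub>k\<^sup>T S\<^sub>l = Q\<^sup>T D\<^sub>k D\<^sub>l Q\<close>: these
  matrices are symmetric and are all diagonalised by the single matrix \<open>Q\<^sup>T\<close>, whose
  inverse is \<open>Q\<close>. Transposing the slices swaps \<open>P\<close> and \<open>Q\<close>, which gives the products
  \<open>S\<^sub>k S\<^sub>l\<^sup>T\<close>. Slices and their products depend continuously on \<open>T\<close>; symmetry is a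
  closed condition and simultaneous diagonalizability becomes approximate
  simultaneous diagonalizability in the limit, which passes the statement to the
  closure of \<open>OT\<close>.\<close>

definition diagonal_mat :: "'a::zero^'n \<Rightarrow> 'a^'n^'n" where
  "diagonal_mat v = (\<chi> i j. if i = j then v $ i else 0)"

definition orth_equiv_diagonal_family :: "('k \<Rightarrow> complex^'n^'n) \<Rightarrow> bool" where
  "orth_equiv_diagonal_family S \<longleftrightarrow>
     (\<exists>P Q d. complex_orthogonal P \<and> complex_orthogonal Q \<and>
        (\<forall>k. S k = transpose P ** diagonal_mat (d k) ** Q))"

definition gram_family :: "('k \<Rightarrow> 'a::comm_semiring_1^'n^'m) \<Rightarrow> 'k \<times> 'k \<Rightarrow> 'a^'n^'n" where
  "gram_family S = (\<lambda>(k, l). transpose (S k) ** S l)"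

lemma orth_equiv_diagonal_familyI:
  assumes "complex_orthogonal P" "complex_orthogonal Q"
    "\<And>k. S k = transpose P ** diagonal_mat (d k) ** Q"
  shows "orth_equiv_diagonal_family S"
  using assms unfolding orth_equiv_diagonal_family_def by blast

lemma matrix_inv_eqI:
  fixes A :: "'a::semiring_1^'n^'m" and B :: "'a^'m^'n"
  assumes "A ** B = mat 1" "B ** A = mat 1"
  shows "matrix_inv A = B"
proof -
  have "A ** matrix_inv A = mat 1 \<and> matrix_inv A ** A = mat 1"
    unfolding matrix_inv_def by (rule someI[of _ B]) (use assms in blast)
  then have "matrix_inv A = matrix_inv A ** (A ** B)"
    using assms by simp
  also have "\<dots> = B"
    using \<open>_ \<and> matrix_inv A ** A = mat 1\<close> by (simp add: matrix_mul_assoc)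
  finally show ?thesis .
qed

lemma complex_orthogonal_right_inverse:
  "complex_orthogonal Q \<Longrightarrow> Q ** transpose Q = mat 1"
  unfolding complex_orthogonal_def by (metis matrix_left_right_inverse)

lemma diagonal_mat_transpose [simp]: "transpose (diagonal_mat v) = diagonal_mat v"
  unfolding diagonal_mat_def transpose_def by (simp add: vec_eq_iff)

lemma diagonal_mat_mult:
  fixes a b :: "'a::semiring_1^'n::finite"
  shows "diagonal_mat a ** diagonal_mat b = diagonal_mat (a * b)"
proof -
  have "(\<Sum>k\<in>UNIV. (if i = k then a $ i else 0) * (if k = j then b $ k else 0))
      = (\<Sum>k\<in>UNIV. if k = i then a $ i * (if i = j then b $ i else 0) else 0)" for i j
    by (rule sum.cong) auto
  then show ?thesis
    unfolding diagonal_mat_def matrix_matrix_mult_def by (simp add: vec_eq_iff)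
qed

lemma diagonal_mat_entry_sum:
  fixes P Q :: "'a::comm_semiring_1^'n::finite^'n"
  shows "(transpose P ** diagonal_mat v ** Q) $ a $ b = (\<Sum>r\<in>UNIV. P $ r $ a * v $ r * Q $ r $ b)"
  by (simp add: matrix_matrix_mult_def transpose_def diagonal_mat_def if_distrib sum_distrib_right
      cong: if_cong)

lemma is_diagonal_matrix_diagonal_mat: "is_diagonal_matrix (diagonal_mat v)"
  unfolding diagonal_mat_def is_diagonal_matrix_def by simp

lemma orthogonal_congruence_diagonal:
  fixes Q :: "complex^'n::finite^'n"
  assumes "complex_orthogonal Q"
  shows "(\<forall>i. symmetric_matrix (transpose Q ** diagonal_mat (v i) ** Q)) \<and>
         simultaneously_diagonalizable (\<lambda>i. transpose Q ** diagonal_mat (v i) ** Q)"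
proof -
  have left: "transpose Q ** Q = mat 1" and right: "Q ** transpose Q = mat 1"
    using assms complex_orthogonal_right_inverse unfolding complex_orthogonal_def by auto
  have "invertible (transpose Q)"
    unfolding invertible_def using left right by blast
  moreover have "matrix_inv (transpose Q) ** (transpose Q ** diagonal_mat (v i) ** Q) ** transpose Q
      = diagonal_mat (v i)" for i
    using matrix_inv_eqI[OF left right] right
    by (simp add: matrix_mul_assoc) (simp flip: matrix_mul_assoc)
  ultimately have "simultaneously_diagonalizable (\<lambda>i. transpose Q ** diagonal_mat (v i) ** Q)"
    unfolding simultaneously_diagonalizable_def by (metis is_diagonal_matrix_diagonal_mat)
  then show ?thesis
    by (simp add: symmetric_matrix_def matrix_transpose_mul matrix_mul_assoc)
qed

lemma gram_family_orth_equiv_diagonal: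
  assumes "orth_equiv_diagonal_family S"
  shows "\<exists>Q v. complex_orthogonal Q \<and> gram_family S = (\<lambda>i. transpose Q ** diagonal_mat (v i) ** Q)"
proof -
  obtain P Q d where P: "complex_orthogonal P" and Q: "complex_orthogonal Q"
    and S: "\<And>k. S k = transpose P ** diagonal_mat (d k) ** Q"
    using assms unfolding orth_equiv_diagonal_family_def by blast
  have "transpose (S k) ** S l
      = transpose Q ** diagonal_mat (d k) ** (P ** transpose P) ** diagonal_mat (d l) ** Q" for k l
    unfolding S by (simp add: matrix_transpose_mul matrix_mul_assoc)
  then have "gram_family S = (\<lambda>(k, l). transpose Q ** diagonal_mat (d k * d l) ** Q)"
    using complex_orthogonal_right_inverse[OF P]
    by (auto simp: gram_family_def diagonal_mat_mult simp flip: matrix_mul_assoc)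
  then show ?thesis
    using Q by (intro exI[of _ Q] exI[of _ "\<lambda>(k, l). d k * d l"]) (auto simp: fun_eq_iff)
qed

lemma orth_equiv_diagonal_family_transpose:
  assumes "orth_equiv_diagonal_family S"
  shows "orth_equiv_diagonal_family (\<lambda>k. transpose (S k))"
proof -
  obtain P Q d where "complex_orthogonal P" "complex_orthogonal Q"
    and "\<And>k. S k = transpose P ** diagonal_mat (d k) ** Q"
    using assms unfolding orth_equiv_diagonal_family_def by blast
  moreover have "transpose (transpose P ** diagonal_mat (d k) ** Q)
      = transpose Q ** diagonal_mat (d k) ** P" for k
    by (simp add: matrix_transpose_mul matrix_mul_assoc)
  ultimately show ?thesis
    unfolding orth_equiv_diagonal_family_def by metis
qed

lemma matrix_vector_mult_axis:
  fixes A :: "'a::comm_semiring_1^'n::finite^'m"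
  shows "(A *v axis i 1) $ r = A $ r $ i"
  by (simp add: matrix_vector_mult_def axis_def if_distrib cong: if_cong)

lemma trilinear_form_axis:
  "trilinear_form T (axis i 1) (axis j 1) (axis k 1) = T $ i $ j $ k"
proof -
  have "(x::complex) * (if P then 1 else 0) = (if P then x else 0)" for x P
    by simp
  then show ?thesis
    by (simp add: trilinear_form_def axis_def)
qed

lemma OT_entry_decomposition:
  assumes "T \<in> OT"
  obtains A B C \<alpha> where "complex_orthogonal A" "complex_orthogonal B" "complex_orthogonal C"
    "\<And>i j k. T $ i $ j $ k = (\<Sum>r\<in>UNIV. \<alpha> $ r * A $ r $ i * B $ r $ j * C $ r $ k)"
proof -
  obtain A B C \<alpha> where orth: "complex_orthogonal A" "complex_orthogonal B" "complex_orthogonal C"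
    and form: "\<And>x y z. trilinear_form T x y z = diag_form \<alpha> (A *v x) (B *v y) (C *v z)"
    using assms unfolding OT_def by blast
  have "T $ i $ j $ k = (\<Sum>r\<in>UNIV. \<alpha> $ r * A $ r $ i * B $ r $ j * C $ r $ k)" for i j k
    using form[of "axis i 1" "axis j 1" "axis k 1"]
    by (simp add: trilinear_form_axis diag_form_def matrix_vector_mult_axis)
  with orth show ?thesis by (rule that)
qed

lemma OT_slices_orth_equiv_diagonal:
  assumes "T \<in> OT" "S \<in> {xslice T, yslice T, zslice T}"
  shows "orth_equiv_diagonal_family S"
proof -
  obtain A B C \<alpha> where o: "complex_orthogonal A" "complex_orthogonal B" "complex_orthogonal C"
    and T: "\<And>i j k. T $ i $ j $ k = (\<Sum>r\<in>UNIV. \<alpha> $ r * A $ r $ i * B $ r $ j * C $ r $ k)"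
    using OT_entry_decomposition[OF assms(1)] by blast
  have "orth_equiv_diagonal_family (xslice T)"
    by (rule orth_equiv_diagonal_familyI[OF o(2,3), where d="\<lambda>k. \<chi> r. \<alpha> $ r * A $ r $ k"])
      (simp add: xslice_def vec_eq_iff diagonal_mat_entry_sum T mult_ac)
  moreover have "orth_equiv_diagonal_family (yslice T)"
    by (rule orth_equiv_diagonal_familyI[OF o(1,3), where d="\<lambda>k. \<chi> r. \<alpha> $ r * B $ r $ k"])
      (simp add: yslice_def vec_eq_iff diagonal_mat_entry_sum T mult_ac)
  moreover have "orth_equiv_diagonal_family (zslice T)"
    by (rule orth_equiv_diagonal_familyI[OF o(1,2), where d="\<lambda>k. \<chi> r. \<alpha> $ r * C $ r $ k"])
      (simp add: zslice_def vec_eq_iff diagonal_mat_entry_sum T mult_ac)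
  ultimately show ?thesis
    using assms(2) by blast
qed

lemma tendsto_matrix_matrix_mult:
  fixes f :: "'a \<Rightarrow> 'b::real_normed_algebra_1^'n::finite^'m" and g :: "'a \<Rightarrow> 'b^'p::finite^'n"
  assumes "(f \<longlongrightarrow> F) net" "(g \<longlongrightarrow> G) net"
  shows "((\<lambda>x. f x ** g x) \<longlongrightarrow> F ** G) net"
  unfolding matrix_matrix_mult_def
  by (intro tendsto_vec_lambda tendsto_sum tendsto_mult tendsto_vec_nth assms)

lemma tendsto_transpose:
  fixes f :: "'a \<Rightarrow> 'b::topological_space^'n::finite^'m::finite"
  assumes "(f \<longlongrightarrow> F) net"
  shows "((\<lambda>x. transpose (f x)) \<longlongrightarrow> transpose F) net"
  unfolding transpose_def by (intro tendsto_vec_lambda tendsto_vec_nth assms)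

lemma tendsto_slices:
  assumes "Ts \<longlonglongrightarrow> T" "(S :: 'n::finite tensor3 \<Rightarrow> _) \<in> {xslice, yslice, zslice}"
  shows "(\<lambda>m. S (Ts m) k) \<longlonglongrightarrow> S T k"
  using assms unfolding xslice_def yslice_def zslice_def
  by (auto intro!: tendsto_vec_lambda tendsto_vec_nth)

lemma symmetric_matrix_limit:
  assumes "\<And>m. symmetric_matrix (M m)" "M \<longlonglongrightarrow> L"
  shows "symmetric_matrix L"
proof -
  have "M \<longlonglongrightarrow> transpose L"
    using tendsto_transpose[OF assms(2)] assms(1) by (simp add: symmetric_matrix_def)
  then show ?thesis
    using assms(2) LIMSEQ_unique unfolding symmetric_matrix_def by blast
qed

lemma approx_simultaneously_diagonalizable_limit:
  fixes M :: "nat \<Rightarrow> 'i::finite \<Rightarrow> complex^'n::finite^'n"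
  assumes "\<And>m. simultaneously_diagonalizable (M m)" "\<And>i. (\<lambda>m. M m i) \<longlonglongrightarrow> L i"
  shows "approx_simultaneously_diagonalizable L"
  unfolding approx_simultaneously_diagonalizable_def
proof (intro allI impI)
  fix e :: real assume "e > 0"
  then have "\<forall>\<^sub>F m in sequentially. \<forall>i. dist (M m i) (L i) < e"
    using assms(2) by (intro eventually_all_finite tendstoD)
  then obtain m where "\<forall>i. dist (M m i) (L i) < e"
    using eventually_sequentially by auto
  then show "\<exists>B. simultaneously_diagonalizable B \<and> (\<forall>i. norm (L i - B i) < e)"
    using assms(1) by (metis dist_norm dist_commute)
qed

lemma gram_family_limit_of_orth_equiv_diagonal:
  fixes S :: "nat \<Rightarrow> 'k::finite \<Rightarrow> complex^'n::finite^'n"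
  assumes "\<And>m. orth_equiv_diagonal_family (S m)" "\<And>k. (\<lambda>m. S m k) \<longlonglongrightarrow> L k"
  shows "(\<forall>i. symmetric_matrix (gram_family L i)) \<and> approx_simultaneously_diagonalizable (gram_family L)"
proof -
  have good: "(\<forall>i. symmetric_matrix (gram_family (S m) i)) \<and>
      simultaneously_diagonalizable (gram_family (S m))" for m
    using gram_family_orth_equiv_diagonal[OF assms(1)] orthogonal_congruence_diagonal by metis
  have lim: "(\<lambda>m. gram_family (S m) i) \<longlonglongrightarrow> gram_family L i" for i
    by (cases i) (simp add: gram_family_def tendsto_matrix_matrix_mult tendsto_transpose assms(2))
  show ?thesis
    using good lim symmetric_matrix_limit approx_simultaneously_diagonalizable_limit by metis
qed

theorem proposition48:
  fixes T :: "'n::finite tensor3"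
  assumes "T \<in> closure OT"
  shows "\<forall>S \<in> {xslice T, yslice T, zslice T}.
           (\<forall>k l. symmetric_matrix (transpose (S k) ** S l)) \<and>
           approx_simultaneously_diagonalizable (\<lambda>(k, l). transpose (S k) ** S l) \<and>
           (\<forall>k l. symmetric_matrix (S k ** transpose (S l))) \<and>
           approx_simultaneously_diagonalizable (\<lambda>(k, l). S k ** transpose (S l))"
proof
  fix S assume "S \<in> {xslice T, yslice T, zslice T}"
  then obtain sl where S: "S = sl T" and sl: "sl \<in> {xslice, yslice, zslice}" by blast
  obtain Ts where Ts: "\<And>m. Ts m \<in> OT" and lim: "Ts \<longlonglongrightarrow> T"
    using assms unfolding closure_sequential by blast
  have orth: "orth_equiv_diagonal_family (sl (Ts m))" for m
    using OT_slices_orth_equiv_diagonal[OF Ts] sl by blast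
  have "(\<forall>i. symmetric_matrix (gram_family S i)) \<and> approx_simultaneously_diagonalizable (gram_family S)"
    unfolding S by (rule gram_family_limit_of_orth_equiv_diagonal[OF orth tendsto_slices[OF lim sl]])
  moreover have "(\<forall>i. symmetric_matrix (gram_family (\<lambda>k. transpose (S k)) i)) \<and>
      approx_simultaneously_diagonalizable (gram_family (\<lambda>k. transpose (S k)))"
    unfolding S
    by (rule gram_family_limit_of_orth_equiv_diagonal[OF orth_equiv_diagonal_family_transpose[OF orth]
          tendsto_transpose[OF tendsto_slices[OF lim sl]]])
  ultimately show "(\<forall>k l. symmetric_matrix (transpose (S k) ** S l)) \<and>
           approx_simultaneously_diagonalizable (\<lambda>(k, l). transpose (S k) ** S l) \<and>
           (\<forall>k l. symmetric_matrix (S k ** transpose (S l))) \<and>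
           approx_simultaneously_diagonalizable (\<lambda>(k, l). S k ** transpose (S l))"
    by (simp add: gram_family_def)
qed

end
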